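(* Let $q\neq-1$ and $r$ be real parameters, $n\ge 0$, $k\ge 0$. The $w_r$-weight $u(n,k,s,r)$ of the set of all tilings of an $n$-board with exactly $k$ dominoes is $$u(n,k,s,r)=q^{k^2}\begin{bmatrix} n-k\\ k\end{bmatrix}(1+q^{k+1}r)\cdots(1+q^{n-k}r)\,s^kx^{n-2k}$$ for $0\le k\le\lfloor n/2\rfloor$, and $u(n,k,s,r)=0$ for $k>\lfloor n/2\rfloor$.
   Context: An $n$-board is a $1\times n$ rectangle with cells numbered $1,\dots,n$, tiled by white squares, black squares (each covering one cell) and dominoes (covering two adjacent cells). The weight $w_r$: a white square has weight $x$; a black square at cell $i$ has weight $q^i r x$; a domino covering cells $i-1,i$ has weight $q^{i-1}s$. The weight of a tiling is the product of the weights of its tiles; the weight of a set of tilings is the sum of the weights. Notation: $[m]=1+q+\cdots+q^{m-1}$, $[m]!=[1][2]\cdots[m]$, and $\begin{bmatrix} m\\ j\end{bmatrix}=\frac{[m]!}{[j]![m-j]!}$ for $0\le j\le m$. Empty products equal $1$. *)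

theory Defs
  imports Main "HOL.Real"
begin

text \<open>Tiles of a 1 x n board, listed from left to right:
  white square, black square, domino.\<close>
datatype tile = White | Black | Domino

fun tile_len :: "tile \<Rightarrow> nat" where
  "tile_len White = 1" | "tile_len Black = 1" | "tile_len Domino = 2"

definition tiling_len :: "tile list \<Rightarrow> nat" where
  "tiling_len ts = (\<Sum>t\<leftarrow>ts. tile_len t)"

definition num_dominoes :: "tile list \<Rightarrow> nat" where
  "num_dominoes ts = length (filter (\<lambda>t. t = Domino) ts)"

definition tilings :: "nat \<Rightarrow> nat \<Rightarrow> tile list set" where
  "tilings n k = {ts. tiling_len ts = n \<and> num_dominoes ts = k}"

text \<open>Weight w_r of a tiling whose first tile starts at cell p+1
  (p cells already covered).\<close>
fun wr_from :: "real \<Rightarrow> real \<Rightarrow> real \<Rightarrow> real \<Rightarrow> nat \<Rightarrow> tile list \<Rightarrow> real" where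
  "wr_from q r s x p [] = 1"
| "wr_from q r s x p (White # ts) = x * wr_from q r s x (p + 1) ts"
| "wr_from q r s x p (Black # ts) = q ^ (p + 1) * r * x * wr_from q r s x (p + 1) ts"
| "wr_from q r s x p (Domino # ts) = q ^ (p + 1) * s * wr_from q r s x (p + 2) ts"

definition wr :: "real \<Rightarrow> real \<Rightarrow> real \<Rightarrow> real \<Rightarrow> tile list \<Rightarrow> real" where
  "wr q r s x ts = wr_from q r s x 0 ts"

definition u :: "real \<Rightarrow> real \<Rightarrow> nat \<Rightarrow> nat \<Rightarrow> real \<Rightarrow> real \<Rightarrow> real" where
  "u q x n k s r = (\<Sum>ts\<in>tilings n k. wr q r s x ts)"

definition qint :: "real \<Rightarrow> nat \<Rightarrow> real" where
  "qint q m = (\<Sum>i<m. q ^ i)"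

definition qfact :: "real \<Rightarrow> nat \<Rightarrow> real" where
  "qfact q m = (\<Prod>i=1..m. qint q i)"

definition qbinom :: "real \<Rightarrow> nat \<Rightarrow> nat \<Rightarrow> real" where
  "qbinom q m j = qfact q m / (qfact q j * qfact q (m - j))"

end

theory Submission
  imports Defs Complex_Main
begin

text \<open>Classify the tilings of an \<open>(n+1)\<close>-board by their last tile: a white or black square on
  cell \<open>n+1\<close> contributes \<open>x (1 + q^(n+1) r)\<close> times a tiling of the \<open>n\<close>-board, a domino
  contributes \<open>q^n s\<close> times a tiling of the \<open>(n-1)\<close>-board with one domino fewer. The closed
  form satisfies the same recurrence by the two q-Pascal rules; \<open>q \<noteq> -1\<close> keeps all
  q-factorials nonzero.\<close>

lemma qint_add: "qint q (a + b) = qint q a + q ^ a * qint q b"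
  by (induction b) (simp_all add: qint_def power_add algebra_simps)

lemma qint_mult_one_minus: "qint q i * (1 - q) = 1 - q ^ i"
proof (induction i)
  case (Suc i)
  have "qint q (Suc i) * (1 - q) = qint q i * (1 - q) + q ^ i * (1 - q)"
    by (simp add: qint_def algebra_simps)
  with Suc show ?case by (simp add: algebra_simps)
qed (simp add: qint_def)

lemma qint_nonzero:
  fixes q :: real
  assumes "q \<noteq> -1" "0 < i"
  shows "qint q i \<noteq> 0"
proof (cases "q = 1")
  case True
  with assms show ?thesis by (simp add: qint_def)
next
  case False
  show ?thesis
  proof
    assume "qint q i = 0"
    then have "q ^ i = 1" using qint_mult_one_minus[of q i] by simp
    then have "\<bar>q\<bar> = 1" using power_eq_1_iff[of q i] assms(2) by auto
    with False assms(1) show False by (auto simp: abs_if split: if_splits)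
  qed
qed

lemma qfact_0 [simp]: "qfact q 0 = 1"
  by (simp add: qfact_def)

lemma qfact_Suc: "qfact q (Suc m) = qfact q m * qint q (Suc m)"
  by (simp add: qfact_def)

lemma qfact_nonzero: "q \<noteq> -1 \<Longrightarrow> qfact q m \<noteq> (0::real)"
  by (induction m) (simp_all add: qfact_Suc qint_nonzero)

lemma qbinom_0: "q \<noteq> -1 \<Longrightarrow> qbinom q m 0 = 1"
  by (simp add: qbinom_def qfact_nonzero)

lemma qbinom_self: "q \<noteq> -1 \<Longrightarrow> qbinom q m m = 1"
  by (simp add: qbinom_def qfact_nonzero)

text \<open>The hypothesis \<open>k < m\<close> matters: \<open>qbinom\<close> uses truncated subtraction, so it does
  not vanish above the diagonal.\<close>
lemma qbinom_pascal:
  fixes q :: real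
  assumes q: "q \<noteq> -1" and "k < m"
  shows "qbinom q (Suc m) (Suc k) = qbinom q m (Suc k) + q ^ (m - k) * qbinom q m k"
    and "qbinom q (Suc m) (Suc k) = q ^ Suc k * qbinom q m (Suc k) + qbinom q m k"
proof -
  obtain j where m: "m = Suc k + j" using \<open>k < m\<close> less_imp_Suc_add by blast
  have diffs: "Suc m - Suc k = Suc j" "m - Suc k = j" "m - k = Suc j" by (simp_all add: m)
  have split1: "qint q (Suc m) = qint q (Suc j) + q ^ Suc j * qint q (Suc k)"
    using qint_add[of q "Suc j" "Suc k"] by (simp add: m ac_simps)
  have split2: "qint q (Suc m) = qint q (Suc k) + q ^ Suc k * qint q (Suc j)"
    using qint_add[of q "Suc k" "Suc j"] by (simp add: m)
  have nz: "qfact q k \<noteq> 0" "qfact q j \<noteq> 0" "qfact q m \<noteq> 0"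
    "qint q (Suc k) \<noteq> 0" "qint q (Suc j) \<noteq> 0"
    using q by (simp_all add: qfact_nonzero qint_nonzero)
  show "qbinom q (Suc m) (Suc k) = qbinom q m (Suc k) + q ^ (m - k) * qbinom q m k"
    unfolding qbinom_def diffs using nz by (simp add: qfact_Suc split1 field_simps)
  show "qbinom q (Suc m) (Suc k) = q ^ Suc k * qbinom q m (Suc k) + qbinom q m k"
    unfolding qbinom_def diffs using nz by (simp add: qfact_Suc split2 field_simps)
qed

text \<open>The first Pascal rule plus \<open>q^(m+1) r\<close> times the second; after cancelling common
  factors this is the recurrence of the closed form.\<close>
lemma qbinom_pascal_weighted:
  fixes q r :: real
  assumes q: "q \<noteq> -1" and "k < m"
  shows "qbinom q (Suc m) (Suc k) * (1 + q ^ Suc m * r)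
    = qbinom q m (Suc k) * (1 + q ^ (Suc m + Suc k) * r)
      + q ^ (m - k) * qbinom q m k * (1 + q ^ Suc k * r)"
proof -
  define a b where "a = q ^ (m - k)" and "b = q ^ Suc k"
  have pow: "q ^ Suc m = a * b" "q ^ (Suc m + Suc k) = a * b * b"
    using \<open>k < m\<close> by (simp_all add: a_def b_def flip: power_add)
  note pascal = qbinom_pascal[OF assms, folded a_def b_def]
  have "qbinom q (Suc m) (Suc k) * (1 + q ^ Suc m * r)
      = qbinom q (Suc m) (Suc k) + a * b * r * qbinom q (Suc m) (Suc k)"
    unfolding pow by (simp add: algebra_simps)
  also have "\<dots> = (qbinom q m (Suc k) + a * qbinom q m k)
      + a * b * r * (b * qbinom q m (Suc k) + qbinom q m k)"
    using pascal by simp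
  also have "\<dots> = qbinom q m (Suc k) * (1 + q ^ (Suc m + Suc k) * r)
      + a * qbinom q m k * (1 + b * r)"
    unfolding pow by (simp add: algebra_simps)
  finally show ?thesis by (simp add: a_def b_def)
qed

lemma tiling_len_Nil [simp]: "tiling_len [] = 0"
  and tiling_len_Cons [simp]: "tiling_len (t # ts) = tile_len t + tiling_len ts"
  and tiling_len_append [simp]: "tiling_len (ts @ ts') = tiling_len ts + tiling_len ts'"
  by (simp_all add: tiling_len_def)

lemma num_dominoes_append [simp]: "num_dominoes (ts @ ts') = num_dominoes ts + num_dominoes ts'"
  by (simp add: num_dominoes_def)

lemma length_le_tiling_len: "length ts \<le> tiling_len ts"
proof (induction ts)
  case (Cons t ts)
  then show ?case by (cases t) auto
qed simp

lemma wr_from_append: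
  "wr_from q r s x p (ts @ ts') = wr_from q r s x p ts * wr_from q r s x (p + tiling_len ts) ts'"
proof (induction ts arbitrary: p)
  case (Cons t ts)
  then show ?case by (cases t) (simp_all add: ac_simps)
qed simp

lemma finite_tilings: "finite (tilings n k)"
proof -
  have "(UNIV :: tile set) = {White, Black, Domino}" using tile.exhaust by auto
  then have "finite (UNIV :: tile set)" by (metis finite.emptyI finite.insertI)
  then have "finite {ts :: tile list. set ts \<subseteq> UNIV \<and> length ts \<le> n}"
    by (rule finite_lists_length_le)
  moreover have "tilings n k \<subseteq> {ts. set ts \<subseteq> UNIV \<and> length ts \<le> n}"
    using length_le_tiling_len by (auto simp: tilings_def)
  ultimately show ?thesis by (rule finite_subset[rotated])
qed

lemma tiling_len_eq_0_iff [simp]: "tiling_len ts = 0 \<longleftrightarrow> ts = []"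
  using length_le_tiling_len[of ts] by auto

lemma tilings_0: "tilings 0 k = (if k = 0 then {[]} else {})"
  by (auto simp: tilings_def num_dominoes_def)

lemma tilings_Suc: "tilings (Suc n) k =
   (\<lambda>ts. ts @ [White]) ` tilings n k \<union> (\<lambda>ts. ts @ [Black]) ` tilings n k \<union>
   (\<lambda>ts. ts @ [Domino]) ` {ts \<in> tilings (n - 1) (k - 1). 0 < k \<and> 0 < n}"
  (is "?L = ?R")
proof
  show "?L \<subseteq> ?R"
  proof
    fix ts assume ts: "ts \<in> ?L"
    then have "ts \<noteq> []" by (auto simp: tilings_def)
    then obtain ys t where ys: "ts = ys @ [t]" by (metis rev_exhaust)
    show "ts \<in> ?R"
      using ts unfolding ys by (cases t) (auto simp: tilings_def num_dominoes_def)
  qed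
  show "?R \<subseteq> ?L" by (auto simp: tilings_def num_dominoes_def)
qed

lemma sum_wr_snoc:
  assumes "\<And>ts. ts \<in> T \<Longrightarrow> tiling_len ts = m"
  shows "(\<Sum>ts \<in> (\<lambda>ts. ts @ [t]) ` T. wr q r s x ts) = wr_from q r s x m [t] * (\<Sum>ts\<in>T. wr q r s x ts)"
proof -
  have "inj_on (\<lambda>ts. ts @ [t]) T" by (auto intro: inj_onI)
  then show ?thesis
    by (simp add: sum.reindex sum_distrib_right wr_def wr_from_append assms mult.commute)
qed

lemma u_0: "u q x 0 k s r = (if k = 0 then 1 else 0)"
  by (simp add: u_def tilings_0 wr_def)

lemma u_Suc: "u q x (Suc n) k s r = x * (1 + q ^ Suc n * r) * u q x n k s r
   + (if 0 < k \<and> 0 < n then q ^ n * s * u q x (n - 1) (k - 1) s r else 0)"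
proof -
  let ?snoc = "\<lambda>t T. (\<lambda>ts. ts @ [t]) ` T"
  let ?D = "{ts \<in> tilings (n - 1) (k - 1). 0 < k \<and> 0 < n}"
  have len: "\<And>ts. ts \<in> tilings m j \<Longrightarrow> tiling_len ts = m" for m j by (simp add: tilings_def)
  have fin: "finite (?snoc t (tilings n k))" "finite (?snoc Domino ?D)" for t
    using finite_tilings by auto
  have disj: "?snoc White (tilings n k) \<inter> ?snoc Black (tilings n k) = {}"
    "(?snoc White (tilings n k) \<union> ?snoc Black (tilings n k)) \<inter> ?snoc Domino ?D = {}"
    by auto
  have domino: "(\<Sum>ts \<in> ?snoc Domino ?D. wr q r s x ts)
      = (if 0 < k \<and> 0 < n then q ^ n * s * u q x (n - 1) (k - 1) s r else 0)"
  proof (cases "0 < k \<and> 0 < n")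
    case True
    then have "?D = tilings (n - 1) (k - 1)" by auto
    with True show ?thesis by (simp add: sum_wr_snoc[OF len] u_def)
  qed auto
  have "u q x (Suc n) k s r = (\<Sum>ts \<in> ?snoc White (tilings n k). wr q r s x ts)
      + (\<Sum>ts \<in> ?snoc Black (tilings n k). wr q r s x ts) + (\<Sum>ts \<in> ?snoc Domino ?D. wr q r s x ts)"
    unfolding u_def tilings_Suc
      sum.union_disjoint[OF finite_UnI[OF fin(1) fin(1)] fin(2) disj(2)]
      sum.union_disjoint[OF fin(1) fin(1) disj(1)] ..
  also have "\<dots> = x * u q x n k s r + q ^ Suc n * r * x * u q x n k s r
      + (if 0 < k \<and> 0 < n then q ^ n * s * u q x (n - 1) (k - 1) s r else 0)"
    unfolding domino by (simp add: sum_wr_snoc[OF len] u_def)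
  finally show ?thesis by (simp add: algebra_simps)
qed

definition u_closed :: "real \<Rightarrow> real \<Rightarrow> real \<Rightarrow> real \<Rightarrow> nat \<Rightarrow> nat \<Rightarrow> real" where
  "u_closed q r s x n k =
    q ^ (k\<^sup>2) * qbinom q (n - k) k * (\<Prod>i=k+1..n-k. 1 + q ^ i * r) * s ^ k * x ^ (n - 2 * k)"

lemma u_closed_0_right: "q \<noteq> -1 \<Longrightarrow> u_closed q r s x n 0 = (\<Prod>i=1..n. 1 + q ^ i * r) * x ^ n"
  by (simp add: u_closed_def qbinom_0)

lemma u_closed_diag: "q \<noteq> -1 \<Longrightarrow> u_closed q r s x (2 * k) k = q ^ (k\<^sup>2) * s ^ k"
  by (simp add: u_closed_def qbinom_self mult_2)

lemma u_closed_Suc_Suc: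
  fixes q r s x :: real
  assumes q: "q \<noteq> -1" and "2 * k < n"
  shows "u_closed q r s x (Suc (Suc n)) (Suc k)
    = x * (1 + q ^ Suc (Suc n) * r) * u_closed q r s x (Suc n) (Suc k)
      + q ^ Suc n * s * u_closed q r s x n k"
proof -
  define m e where "m = n - k" and "e = n - 2 * k - 1"
  define f where "f i = 1 + q ^ i * r" for i
  define A where "A = (\<Prod>i = Suc (Suc k)..m. f i)"
  define B1 B0 Bm where "B1 = qbinom q (Suc m) (Suc k)"
    and "B0 = qbinom q m (Suc k)" and "Bm = qbinom q m k"
  define a b c where "a = q ^ (k\<^sup>2)" and "b = q ^ Suc (2 * k)" and "c = q ^ (m - k)"
  have "k < m" using \<open>2 * k < n\<close> by (simp add: m_def)
  have index: "Suc (Suc n) - Suc k = Suc m" "Suc n - Suc k = m" "n - k = m"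
    "Suc (Suc n) - 2 * Suc k = Suc e" "Suc n - 2 * Suc k = e" "n - 2 * k = Suc e"
    using \<open>2 * k < n\<close> by (simp_all add: m_def e_def)
  have prods: "(\<Prod>i = Suc k + 1..Suc m. f i) = A * f (Suc m)"
    "(\<Prod>i = Suc k + 1..m. f i) = A" "(\<Prod>i = k + 1..m. f i) = f (Suc k) * A"
    using \<open>k < m\<close> by (simp_all add: A_def prod.atLeast_Suc_atMost)
  have "(Suc k)\<^sup>2 = k\<^sup>2 + Suc (2 * k)" "Suc n = Suc (2 * k) + (m - k)"
    using \<open>2 * k < n\<close> by (simp_all add: m_def power2_eq_square)
  then have pow: "q ^ ((Suc k)\<^sup>2) = a * b" "q ^ Suc n = b * c"
    unfolding a_def b_def c_def by (simp_all only: power_add)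
  have "Suc m + Suc k = Suc (Suc n)"
    using \<open>2 * k < n\<close> by (simp add: m_def)
  then have pascal: "B1 * f (Suc m) = B0 * f (Suc (Suc n)) + c * Bm * f (Suc k)"
    using qbinom_pascal_weighted[OF q \<open>k < m\<close>, of r]
    by (simp add: B1_def B0_def Bm_def c_def f_def)
  have "u_closed q r s x (Suc (Suc n)) (Suc k) = a * b * A * s ^ Suc k * x ^ Suc e * (B1 * f (Suc m))"
    unfolding u_closed_def index f_def[symmetric] prods pow B1_def by (simp add: ac_simps)
  also have "\<dots> = a * b * A * s ^ Suc k * x ^ Suc e * (B0 * f (Suc (Suc n)) + c * Bm * f (Suc k))"
    by (simp only: pascal)
  also have "\<dots> = x * (1 + q ^ Suc (Suc n) * r) * u_closed q r s x (Suc n) (Suc k)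
      + q ^ Suc n * s * u_closed q r s x n k"
    unfolding u_closed_def index f_def[symmetric] prods pow B0_def Bm_def a_def[symmetric]
    by (simp add: algebra_simps)
  finally show ?thesis .
qed

lemma u_eq_u_closed:
  fixes q r s x :: real
  assumes q: "q \<noteq> -1"
  shows "u q x n k s r = (if k \<le> n div 2 then u_closed q r s x n k else 0)"
proof (induction n arbitrary: k rule: induct_nat_012)
  case 0
  show ?case by (simp add: u_0 u_closed_0_right[OF q])
next
  case 1
  show ?case by (simp add: u_Suc[of q x 0] u_0 u_closed_0_right[OF q])
next
  case (ge2 n)
  have rec: "u q x (Suc (Suc n)) k s r = x * (1 + q ^ Suc (Suc n) * r) * u q x (Suc n) k s r
      + (if 0 < k then q ^ Suc n * s * u q x n (k - 1) s r else 0)"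
    using u_Suc[of q x "Suc n" k s r] by simp
  show ?case
  proof (cases k)
    case 0
    have "u_closed q r s x (Suc (Suc n)) 0 = x * (1 + q ^ Suc (Suc n) * r) * u_closed q r s x (Suc n) 0"
      unfolding u_closed_0_right[OF q] by (simp add: algebra_simps)
    with 0 show ?thesis using rec ge2.IH(2)[of 0] by simp
  next
    case (Suc k')
    have rec_Suc: "u q x (Suc (Suc n)) (Suc k') s r = x * (1 + q ^ Suc (Suc n) * r) * u q x (Suc n) (Suc k') s r
        + q ^ Suc n * s * u q x n k' s r"
      using rec Suc by simp
    consider "n < 2 * k'" | "n = 2 * k'" | "2 * k' < n" by linarith
    then show ?thesis
    proof cases
      case 1
      then have "\<not> Suc k' \<le> Suc n div 2" "\<not> k' \<le> n div 2" by auto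
      then show ?thesis by (simp add: rec_Suc ge2.IH Suc)
    next
      case 2
      then have "\<not> Suc k' \<le> Suc n div 2" "k' \<le> n div 2" by auto
      then have "u q x (Suc (Suc n)) k s r = q ^ Suc n * s * u_closed q r s x n k'"
        by (simp add: rec_Suc ge2.IH Suc)
      also have "\<dots> = u_closed q r s x (2 * Suc k') (Suc k')"
        unfolding u_closed_diag[OF q] 2 power2_eq_square by (simp add: power_add mult_2)
      finally show ?thesis using 2 Suc by simp
    next
      case 3
      then have "Suc k' \<le> Suc n div 2" "k' \<le> n div 2" by auto
      with 3 show ?thesis by (simp add: rec_Suc ge2.IH Suc u_closed_Suc_Suc[OF q])
    qed
  qed
qed

theorem theorem2p2:
  fixes q r s x :: real and n k :: nat
  assumes "q \<noteq> -1"
  shows "u q x n k s r =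
    (if k \<le> n div 2 then
       q ^ (k\<^sup>2) * qbinom q (n - k) k * (\<Prod>i=k+1..n-k. 1 + q ^ i * r) * s ^ k * x ^ (n - 2 * k)
     else 0)"
  using u_eq_u_closed[OF assms] by (simp only: u_closed_def)

end
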